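(* There exist a Fuchsian group $\Gamma$ and two subsets $F_1, F_2 \subset \mathbb{H}$, each of which is a fundamental domain of $\Gamma$ in the following sense, such that $\mu(F_1) \neq \mu(F_2)$. A subset $F \subset \mathbb{H}$ is a fundamental domain of $\Gamma$ (in this sense) if: (i$'$) $F$ is open and connected; (ii) no two distinct points of $F$ are equivalent under $\Gamma$; (iii) for every $z \in \mathbb{H}$ there exists some $M \in \Gamma$ such that $Mz \in \overline{F}$, where $\overline{F}$ denotes the closure of $F$ in $\mathbb{H}$.
   Context: $\mathbb{H} = \{ z \in \mathbb{C} : \mathrm{Im}\, z > 0\}$ is the upper half-plane. A Fuchsian group is a discrete subgroup $\Gamma$ of $\mathrm{PSL}_2(\mathbb{R})$, acting on $\mathbb{H}$ by $z \mapsto Mz = \frac{az+b}{cz+d}$ for $M = \pm\begin{pmatrix} a & b \\ c & d\end{pmatrix}$. Two points $z, w \in \mathbb{H}$ are equivalent under $\Gamma$ if $w = Mz$ for some $M \in \Gamma$. $\mu$ denotes the hyperbolic area measure on $\mathbb{H}$, $d\mu = y^{-2}\,dx\,dy$ (for $z = x+iy$). *)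

theory Defs
  imports "HOL-Analysis.Analysis"
begin

definition upper_half_plane :: "complex set" where
  "upper_half_plane = {z. Im z > 0}"

text \<open>SL_2(R) as real 2x2 matrices of determinant 1. An element of PSL_2(R) is
  a pair of matrices plus/minus A; a subgroup of PSL_2(R) corresponds exactly to a
  subgroup of SL_2(R) containing minus the identity (its preimage).\<close>
definition SL2 :: "(real^2^2) set" where
  "SL2 = {A. det A = 1}"

definition mobius :: "real^2^2 \<Rightarrow> complex \<Rightarrow> complex" where
  "mobius A z = (complex_of_real (A$1$1) * z + complex_of_real (A$1$2)) /
                (complex_of_real (A$2$1) * z + complex_of_real (A$2$2))"

definition fuchsian :: "(real^2^2) set \<Rightarrow> bool" where
  "fuchsian G \<longleftrightarrow> G \<subseteq> SL2 \<and> mat 1 \<in> G \<and> - mat 1 \<in> G \<and>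
     (\<forall>A\<in>G. \<forall>B\<in>G. A ** B \<in> G) \<and> (\<forall>A\<in>G. matrix_inv A \<in> G) \<and>
     (\<forall>A\<in>G. \<exists>e>0. \<forall>B\<in>G. dist B A < e \<longrightarrow> B = A)"

definition hyp_area :: "complex set \<Rightarrow> ennreal" where
  "hyp_area F = (\<integral>\<^sup>+ z. ennreal (1 / (Im z)\<^sup>2) * indicator F z \<partial>lborel)"

definition fundamental_domain :: "(real^2^2) set \<Rightarrow> complex set \<Rightarrow> bool" where
  "fundamental_domain G F \<longleftrightarrow>
     F \<subseteq> upper_half_plane \<and> open F \<and> connected F \<and>
     (\<forall>z\<in>F. \<forall>w\<in>F. (\<exists>M\<in>G. w = mobius M z) \<longrightarrow> z = w) \<and>
     (\<forall>z\<in>upper_half_plane. \<exists>M\<in>G. mobius M z \<in> closure F \<inter> upper_half_plane)"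

end

theory Submission
  imports Defs
begin

(* For the trivial group (the preimage {I, -I} of the identity of PSL_2(R)) condition (ii) is
   vacuous and (iii) says that F is dense in H, so every open connected dense subset of H is a
   fundamental domain. H itself has infinite hyperbolic area. But if q_0, q_1, ... enumerate a
   countable dense subset of H, each q_n can be joined to i by a thin L-shaped open set of
   hyperbolic area at most 2^-n; the union of these sets is open, connected (all of them contain
   i), dense in H, and has hyperbolic area at most 2. *)

lemma matrix_mul_uminus_left: "(- A) ** B = - (A ** B)"
  and matrix_mul_uminus_right: "A ** (- B) = - (A ** B)"
  for A :: "'a::ring_1^'n^'m" and B :: "'a^'p^'n"
  by (simp_all add: vec_eq_iff matrix_matrix_mult_def sum_negf)

lemma matrix_inv_eqI:
  fixes A B :: "'a::semiring_1^'n^'n"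
  assumes "A ** B = mat 1" "B ** A = mat 1"
  shows "matrix_inv A = B"
  unfolding matrix_inv_def
proof (rule someI2[where a = B])
  fix C assume C: "A ** C = mat 1 \<and> C ** A = mat 1"
  then have "C = (C ** A) ** B"
    by (metis assms(1) matrix_mul_assoc matrix_mul_rid)
  with C show "C = B" by simp
qed (use assms in simp)

lemma open_upper_half_plane: "open upper_half_plane"
  by (simp add: upper_half_plane_def open_halfspace_Im_gt)

lemma connected_upper_half_plane: "connected upper_half_plane"
  by (simp add: upper_half_plane_def convex_connected convex_halfspace_Im_gt)

lemma ii_in_upper_half_plane: "\<i> \<in> upper_half_plane"
  by (simp add: upper_half_plane_def)

lemma countable_dense_subset_open:
  fixes S :: "'a::second_countable_topology set"
  assumes "open S"
  obtains D where "countable D" "D \<subseteq> S" "S \<subseteq> closure D"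
proof -
  obtain D :: "'a set" where "countable D" and D: "\<And>X. open X \<Longrightarrow> X \<noteq> {} \<Longrightarrow> \<exists>d\<in>D. d \<in> X"
    using countable_dense_exists by blast
  have "interior (- D) = {}"
    using D[of "interior (- D)"] interior_subset by blast
  then have "closure D = UNIV"
    by (simp add: closure_interior)
  then have "S \<subseteq> closure (S \<inter> D)"
    using open_Int_closure_subset[OF \<open>open S\<close>, of D] by simp
  with \<open>countable D\<close> show thesis
    by (intro that[of "S \<inter> D"]) auto
qed

definition trivial_group :: "(real^2^2) set" where
  "trivial_group = {mat 1, - mat 1}"

lemma mobius_trivial_group: "M \<in> trivial_group \<Longrightarrow> mobius M z = z"
  by (auto simp: trivial_group_def mobius_def mat_def)

lemma fuchsian_trivial_group: "fuchsian trivial_group"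
  unfolding fuchsian_def
proof (intro conjI ballI)
  show "trivial_group \<subseteq> SL2"
    by (simp add: trivial_group_def SL2_def det_2 mat_def)
  show "A ** B \<in> trivial_group" if "A \<in> trivial_group" "B \<in> trivial_group" for A B
    using that by (auto simp: trivial_group_def matrix_mul_uminus_left matrix_mul_uminus_right)
  show "matrix_inv A \<in> trivial_group" if "A \<in> trivial_group" for A
    using that by (auto simp: trivial_group_def matrix_inv_eqI matrix_mul_uminus_left)
  show "\<exists>e>0. \<forall>B\<in>trivial_group. dist B A < e \<longrightarrow> B = A" for A
    using finite_set_avoid[of trivial_group A]
    by (force simp: trivial_group_def dist_commute)
qed (simp_all add: trivial_group_def)

lemma fundamental_domain_trivial_group_iff:
  "fundamental_domain trivial_group F \<longleftrightarrow>
     F \<subseteq> upper_half_plane \<and> open F \<and> connected F \<and> upper_half_plane \<subseteq> closure F"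
  by (auto simp: fundamental_domain_def mobius_trivial_group trivial_group_def)

lemma hyp_area_eq_emeasure:
  "A \<in> sets borel \<Longrightarrow> hyp_area A = emeasure (density lborel (\<lambda>z. ennreal (1 / (Im z)\<^sup>2))) A"
  unfolding hyp_area_def by (simp add: emeasure_density)

lemma hyp_area_mono: "A \<subseteq> B \<Longrightarrow> hyp_area A \<le> hyp_area B"
  unfolding hyp_area_def
  by (intro nn_integral_mono mult_left_mono) (auto simp: indicator_def)

lemma hyp_area_UN_le:
  assumes "\<And>n. A n \<in> sets borel"
  shows "hyp_area (\<Union>n. A n) \<le> (\<Sum>n. hyp_area (A n))"
  using assms by (simp add: hyp_area_eq_emeasure emeasure_subadditive_countably image_subset_iff)

lemma hyp_area_ge_const:
  assumes "A \<in> sets borel" "\<And>z. z \<in> A \<Longrightarrow> k \<le> 1 / (Im z)\<^sup>2"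
  shows "ennreal k * emeasure lborel A \<le> hyp_area A"
proof -
  have "ennreal k * emeasure lborel A = (\<integral>\<^sup>+ z. ennreal k * indicator A z \<partial>lborel)"
    using assms(1) by (simp add: nn_integral_cmult_indicator)
  also have "\<dots> \<le> hyp_area A"
    unfolding hyp_area_def using assms(2) by (intro nn_integral_mono) (auto simp: indicator_def ennreal_leI)
  finally show ?thesis .
qed

lemma hyp_area_le_const:
  assumes "A \<in> sets borel" "\<And>z. z \<in> A \<Longrightarrow> 1 / (Im z)\<^sup>2 \<le> k"
  shows "hyp_area A \<le> ennreal k * emeasure lborel A"
proof -
  have "hyp_area A \<le> (\<integral>\<^sup>+ z. ennreal k * indicator A z \<partial>lborel)"
    unfolding hyp_area_def using assms(2) by (intro nn_integral_mono) (auto simp: indicator_def ennreal_leI)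
  also have "\<dots> = ennreal k * emeasure lborel A"
    using assms(1) by (simp add: nn_integral_cmult_indicator)
  finally show ?thesis .
qed

lemma emeasure_lborel_box_complex:
  "a \<le> b \<Longrightarrow> c \<le> d \<Longrightarrow> emeasure lborel (box (Complex a c) (Complex b d)) = ennreal ((b - a) * (d - c))"
  by (simp add: emeasure_lborel_box_eq Basis_complex_def)

lemma hyp_area_upper_half_plane: "hyp_area upper_half_plane = top"
proof -
  have unbounded: "ennreal r \<le> hyp_area upper_half_plane" if "r \<ge> 0" for r
  proof -
    let ?B = "box (Complex 0 1) (Complex (4 * r) 2)"
    have "ennreal r = ennreal (1 / 4) * emeasure lborel ?B"
      using that by (simp add: emeasure_lborel_box_complex flip: ennreal_mult')
    also have "\<dots> \<le> hyp_area ?B"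
    proof (rule hyp_area_ge_const)
      fix z assume "z \<in> ?B"
      then have "1 < Im z" "Im z < 2" by (auto simp: in_box_complex_iff)
      then have "(Im z)\<^sup>2 \<le> 2\<^sup>2" by (intro power_mono) auto
      then show "1 / 4 \<le> 1 / (Im z)\<^sup>2"
        using \<open>1 < Im z\<close> by (simp add: field_simps)
    qed simp
    also have "\<dots> \<le> hyp_area upper_half_plane"
      by (intro hyp_area_mono) (auto simp: in_box_complex_iff upper_half_plane_def)
    finally show ?thesis .
  qed
  show ?thesis
  proof (cases "hyp_area upper_half_plane" rule: ennreal_cases)
    case (real r)
    with unbounded[of "r + 1"] show ?thesis by simp
  qed
qed

(* The open d-neighbourhood, in the max-norm, of the path that runs horizontally from i to
   Re z + i and then vertically to z. *)
definition hook :: "complex \<Rightarrow> real \<Rightarrow> complex set" where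
  "hook z d =
     box (Complex (min 0 (Re z) - d) (1 - d)) (Complex (max 0 (Re z) + d) (1 + d)) \<union>
     box (Complex (Re z - d) (min 1 (Im z) - d)) (Complex (Re z + d) (max 1 (Im z) + d))"

lemma open_hook: "open (hook z d)"
  by (simp add: hook_def open_Un open_box)

lemma ii_in_hook: "0 < d \<Longrightarrow> \<i> \<in> hook z d"
  by (auto simp: hook_def in_box_complex_iff min_def max_def)

lemma in_hook: "0 < d \<Longrightarrow> z \<in> hook z d"
  by (auto simp: hook_def in_box_complex_iff min_def max_def)

lemma connected_hook: "0 < d \<Longrightarrow> connected (hook z d)"
  unfolding hook_def
  by (intro connected_Un convex_connected convex_box)
    (auto simp: disjoint_iff in_box_complex_iff min_def max_def intro!: exI[of _ "Complex (Re z) 1"])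

lemma Im_hook_gt:
  assumes "w \<in> hook z d" "2 * d \<le> min 1 (Im z)"
  shows "min 1 (Im z) / 2 < Im w"
  using assms by (auto simp: hook_def in_box_complex_iff)

lemma hook_subset_upper_half_plane:
  "0 < d \<Longrightarrow> 2 * d \<le> min 1 (Im z) \<Longrightarrow> hook z d \<subseteq> upper_half_plane"
  using Im_hook_gt[of _ z d] by (force simp: upper_half_plane_def)

lemma hyp_area_hook_le:
  assumes "0 < d" "2 * d \<le> min 1 (Im z)"
  shows "hyp_area (hook z d) \<le> ennreal (8 * d * (\<bar>Re z\<bar> + \<bar>Im z - 1\<bar> + 2) / (min 1 (Im z))\<^sup>2)"
proof -
  define m where "m = min 1 (Im z)"
  have m: "0 < m" "m \<le> 1" "2 * d \<le> m"
    using assms by (auto simp: m_def)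
  have "1 / (Im w)\<^sup>2 \<le> 4 / m\<^sup>2" if "w \<in> hook z d" for w
  proof -
    have w: "m / 2 < Im w"
      using Im_hook_gt[OF that] assms by (simp add: m_def)
    then have "(m / 2)\<^sup>2 \<le> (Im w)\<^sup>2"
      using m by (intro power_mono) auto
    then have "1 / (Im w)\<^sup>2 \<le> 1 / (m / 2)\<^sup>2"
      using m w by (intro divide_left_mono) auto
    then show ?thesis
      by (simp add: power_divide)
  qed
  then have "hyp_area (hook z d) \<le> ennreal (4 / m\<^sup>2) * emeasure lborel (hook z d)"
    by (intro hyp_area_le_const) (simp_all add: hook_def)
  also have "emeasure lborel (hook z d) \<le>
      ennreal ((\<bar>Re z\<bar> + 2 * d) * (2 * d)) + ennreal ((2 * d) * (\<bar>Im z - 1\<bar> + 2 * d))"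
    unfolding hook_def using \<open>0 < d\<close>
    by (intro emeasure_subadditive[THEN order.trans] add_mono) (auto simp: emeasure_lborel_box_complex)
  also have "ennreal (4 / m\<^sup>2) *
      (ennreal ((\<bar>Re z\<bar> + 2 * d) * (2 * d)) + ennreal ((2 * d) * (\<bar>Im z - 1\<bar> + 2 * d))) =
      ennreal (8 * d * (\<bar>Re z\<bar> + \<bar>Im z - 1\<bar> + 4 * d) / m\<^sup>2)"
    using \<open>0 < d\<close> by (simp add: field_simps power2_eq_square flip: ennreal_plus ennreal_mult)
  also have "\<dots> \<le> ennreal (8 * d * (\<bar>Re z\<bar> + \<bar>Im z - 1\<bar> + 2) / m\<^sup>2)"
    using m \<open>0 < d\<close> by (intro ennreal_leI divide_right_mono mult_left_mono) auto
  finally show ?thesis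
    by (simp add: m_def mult_left_mono)
qed

lemma exists_connected_open_through_ii_small_hyp_area:
  assumes "z \<in> upper_half_plane" "0 < e"
  shows "\<exists>U. open U \<and> connected U \<and> U \<subseteq> upper_half_plane \<and> \<i> \<in> U \<and> z \<in> U \<and>
             hyp_area U \<le> ennreal e"
proof -
  define m where "m = min 1 (Im z)"
  define C where "C = 8 * (\<bar>Re z\<bar> + \<bar>Im z - 1\<bar> + 2) / m\<^sup>2"
  define d where "d = min (m / 2) (e / C)"
  have "0 < m"
    using assms(1) by (simp add: m_def upper_half_plane_def)
  then have "0 < C"
    unfolding C_def by (intro divide_pos_pos mult_pos_pos add_nonneg_pos) auto
  have d: "0 < d" "2 * d \<le> m" "d * C \<le> e"
  proof -
    show "0 < d" "2 * d \<le> m"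
      using \<open>0 < m\<close> \<open>0 < C\<close> \<open>0 < e\<close> by (simp_all add: d_def)
    have "d \<le> e / C"
      by (simp add: d_def)
    then show "d * C \<le> e"
      using \<open>0 < C\<close> by (simp add: pos_le_divide_eq)
  qed
  have "hyp_area (hook z d) \<le> ennreal (d * C)"
    using hyp_area_hook_le[of d z] d by (simp add: m_def C_def ac_simps)
  also have "\<dots> \<le> ennreal e"
    using d by (intro ennreal_leI)
  finally have "hyp_area (hook z d) \<le> ennreal e" .
  moreover have "hook z d \<subseteq> upper_half_plane"
    using d by (intro hook_subset_upper_half_plane) (simp_all add: m_def)
  ultimately show ?thesis
    using d by (intro exI[of _ "hook z d"]) (simp add: open_hook connected_hook ii_in_hook in_hook)
qed

lemma exists_dense_connected_open_finite_hyp_area: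
  "\<exists>F. F \<subseteq> upper_half_plane \<and> open F \<and> connected F \<and> upper_half_plane \<subseteq> closure F \<and>
       hyp_area F < top"
proof -
  obtain D where "countable D" "D \<subseteq> upper_half_plane" "upper_half_plane \<subseteq> closure D"
    using countable_dense_subset_open open_upper_half_plane by blast
  moreover have "D \<noteq> {}"
    using \<open>upper_half_plane \<subseteq> closure D\<close> ii_in_upper_half_plane by auto
  ultimately have q: "range (from_nat_into D) = D" "from_nat_into D n \<in> upper_half_plane" for n
    by (auto intro: from_nat_into)
  have "\<forall>n. \<exists>U. open U \<and> connected U \<and> U \<subseteq> upper_half_plane \<and> \<i> \<in> U \<and>
      from_nat_into D n \<in> U \<and> hyp_area U \<le> ennreal ((1 / 2) ^ n)"
    using exists_connected_open_through_ii_small_hyp_area[OF q(2)] by simp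
  then obtain U where U: "\<And>n. open (U n) \<and> connected (U n) \<and> U n \<subseteq> upper_half_plane \<and>
      \<i> \<in> U n \<and> from_nat_into D n \<in> U n \<and> hyp_area (U n) \<le> ennreal ((1 / 2) ^ n)"
    by metis
  define F where "F = (\<Union>n. U n)"
  have "connected F"
    unfolding F_def using U by (intro connected_Union) auto
  have "D \<subseteq> F"
    unfolding F_def using U q(1) by (metis UN_I UNIV_I rangeE subsetI)
  then have "upper_half_plane \<subseteq> closure F"
    using \<open>upper_half_plane \<subseteq> closure D\<close> closure_mono by blast
  have "hyp_area F \<le> (\<Sum>n. hyp_area (U n))"
    unfolding F_def using U by (intro hyp_area_UN_le borel_open) blast
  also have "\<dots> \<le> (\<Sum>n. ennreal ((1 / 2) ^ n))"
    using U by (intro suminf_le) auto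
  also have "\<dots> = ennreal 2"
    by (simp add: suminf_ennreal2 suminf_geometric)
  finally have "hyp_area F < top"
    by (rule order.strict_trans1) simp
  with \<open>connected F\<close> \<open>upper_half_plane \<subseteq> closure F\<close> show ?thesis
    using U by (intro exI[of _ F]) (auto simp: F_def)
qed

theorem proposition1:
  shows "\<exists>G F1 F2. fuchsian G \<and> fundamental_domain G F1 \<and> fundamental_domain G F2 \<and>
            hyp_area F1 \<noteq> hyp_area F2"
proof -
  obtain F where "F \<subseteq> upper_half_plane" "open F" "connected F" "upper_half_plane \<subseteq> closure F"
    and "hyp_area F < top"
    using exists_dense_connected_open_finite_hyp_area by blast
  then have "fundamental_domain trivial_group F"
    by (simp add: fundamental_domain_trivial_group_iff)
  moreover have "fundamental_domain trivial_group upper_half_plane"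
    by (simp add: fundamental_domain_trivial_group_iff open_upper_half_plane
        connected_upper_half_plane closure_subset)
  moreover have "hyp_area upper_half_plane \<noteq> hyp_area F"
    using \<open>hyp_area F < top\<close> by (simp add: hyp_area_upper_half_plane)
  ultimately show ?thesis
    using fuchsian_trivial_group by blast
qed

end
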